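(* Let $(A,\cdot,\alpha)$ be a Hom-associative algebra, $(V,l,r,\beta)$ an $A$-bimodule and $T:V\to A$ an $\mathcal{O}$-operator associated to $(V,l,r,\beta)$. Define $u\ast v:=l(T(u))v-r(T(u))v$ for $u,v\in V$. Then $(V,\ast,\beta)$ is a Hom-preLie algebra.
   Context: A Hom-associative algebra $(A,\cdot,\alpha)$: $\cdot$ bilinear, $\alpha$ linear, $(x\cdot y)\cdot\alpha(z)=\alpha(x)\cdot(y\cdot z)$. An $A$-bimodule $(V,l,r,\beta)$: a vector space $V$, linear $\beta:V\to V$, linear maps $l,r:A\to\mathfrak{gl}(V)$ with $l(x\cdot y)\beta=l(\alpha(x))l(y)$, $r(\alpha(y))l(x)=l(\alpha(x))r(y)$, $r(\alpha(y))r(x)=r(x\cdot y)\beta$ for all $x,y\in A$. An $\mathcal{O}$-operator associated to $(V,l,r,\beta)$ is a linear $T:V\to A$ with $\alpha T=T\beta$ and $T(u)\cdot T(v)=T(l(T(u))v+r(T(v))u)$ for all $u,v\in V$. A Hom-preLie algebra $(S,\ast,\beta)$: $\ast$ bilinear, $\beta$ linear, $(u\ast v)\ast\beta(w)-\beta(u)\ast(v\ast w)=(v\ast u)\ast\beta(w)-\beta(v)\ast(u\ast w)$ for all $u,v,w$. *)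

theory Defs
  imports Main "HOL.Vector_Spaces"
begin

definition bilinear_map ::
  "('k::field \<Rightarrow> 'a::ab_group_add \<Rightarrow> 'a) \<Rightarrow> ('k \<Rightarrow> 'b::ab_group_add \<Rightarrow> 'b) \<Rightarrow>
   ('k \<Rightarrow> 'c::ab_group_add \<Rightarrow> 'c) \<Rightarrow> ('a \<Rightarrow> 'b \<Rightarrow> 'c) \<Rightarrow> bool" where
  "bilinear_map sA sB sC m \<longleftrightarrow>
     (\<forall>x. Vector_Spaces.linear sB sC (m x)) \<and> (\<forall>y. Vector_Spaces.linear sA sC (\<lambda>x. m x y))"

definition hom_assoc_algebra ::
  "('k::field \<Rightarrow> 'a::ab_group_add \<Rightarrow> 'a) \<Rightarrow> ('a \<Rightarrow> 'a \<Rightarrow> 'a) \<Rightarrow> ('a \<Rightarrow> 'a) \<Rightarrow> bool" where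
  "hom_assoc_algebra sA mult alpha \<longleftrightarrow>
     vector_space sA \<and> bilinear_map sA sA sA mult \<and> Vector_Spaces.linear sA sA alpha \<and>
     (\<forall>x y z. mult (mult x y) (alpha z) = mult (alpha x) (mult y z))"

text \<open>l, r : A \<rightarrow> gl(V) are represented as curried maps 'a => 'v => 'v,
  linear in both arguments (i.e. linear maps A \<rightarrow> gl(V)).\<close>
definition hom_bimodule ::
  "('k::field \<Rightarrow> 'a::ab_group_add \<Rightarrow> 'a) \<Rightarrow> ('a \<Rightarrow> 'a \<Rightarrow> 'a) \<Rightarrow> ('a \<Rightarrow> 'a) \<Rightarrow>
   ('k \<Rightarrow> 'v::ab_group_add \<Rightarrow> 'v) \<Rightarrow> ('a \<Rightarrow> 'v \<Rightarrow> 'v) \<Rightarrow> ('a \<Rightarrow> 'v \<Rightarrow> 'v) \<Rightarrow> ('v \<Rightarrow> 'v) \<Rightarrow> bool" where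
  "hom_bimodule sA mult alpha sV l r beta \<longleftrightarrow>
     vector_space sV \<and> Vector_Spaces.linear sV sV beta \<and>
     bilinear_map sA sV sV l \<and> bilinear_map sA sV sV r \<and>
     (\<forall>x y v. l (mult x y) (beta v) = l (alpha x) (l y v)) \<and>
     (\<forall>x y v. r (alpha y) (l x v) = l (alpha x) (r y v)) \<and>
     (\<forall>x y v. r (alpha y) (r x v) = r (mult x y) (beta v))"

definition O_operator ::
  "('k::field \<Rightarrow> 'a::ab_group_add \<Rightarrow> 'a) \<Rightarrow> ('a \<Rightarrow> 'a \<Rightarrow> 'a) \<Rightarrow> ('a \<Rightarrow> 'a) \<Rightarrow>
   ('k \<Rightarrow> 'v::ab_group_add \<Rightarrow> 'v) \<Rightarrow> ('a \<Rightarrow> 'v \<Rightarrow> 'v) \<Rightarrow> ('a \<Rightarrow> 'v \<Rightarrow> 'v) \<Rightarrow> ('v \<Rightarrow> 'v) \<Rightarrow>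
   ('v \<Rightarrow> 'a) \<Rightarrow> bool" where
  "O_operator sA mult alpha sV l r beta T \<longleftrightarrow>
     Vector_Spaces.linear sV sA T \<and> (\<forall>v. alpha (T v) = T (beta v)) \<and>
     (\<forall>u v. mult (T u) (T v) = T (l (T u) v + r (T v) u))"

definition hom_prelie ::
  "('k::field \<Rightarrow> 'v::ab_group_add \<Rightarrow> 'v) \<Rightarrow> ('v \<Rightarrow> 'v \<Rightarrow> 'v) \<Rightarrow> ('v \<Rightarrow> 'v) \<Rightarrow> bool" where
  "hom_prelie sV pm beta \<longleftrightarrow>
     vector_space sV \<and> bilinear_map sV sV sV pm \<and> Vector_Spaces.linear sV sV beta \<and>
     (\<forall>u v w. pm (pm u v) (beta w) - pm (beta u) (pm v w) =
              pm (pm v u) (beta w) - pm (beta v) (pm u w))"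

end

theory Submission
  imports Defs
begin

text \<open>Write \<open>u \<ast> v = \<rho> (T u) v\<close> with \<open>\<rho> x = l x - r x\<close>. The bimodule axioms make \<rho>
  a representation of the commutator bracket \<open>[x, y] = x \<cdot> y - y \<cdot> x\<close>:
  \<open>\<rho> (\<alpha> x) \<circ> \<rho> y - \<rho> (\<alpha> y) \<circ> \<rho> x = \<rho> [x, y] \<circ> \<beta>\<close>, the mixed terms cancelling by the
  middle axiom. The \<O>-operator identity gives \<open>T (u \<ast> v) - T (v \<ast> u) = [T u, T v]\<close>.
  Hence both sides of the Hom-preLie identity, rewritten as
  \<open>(u \<ast> v - v \<ast> u) \<ast> \<beta> w = \<beta> u \<ast> (v \<ast> w) - \<beta> v \<ast> (u \<ast> w)\<close>, equal
  \<open>\<rho> [T u, T v] (\<beta> w)\<close>, using \<open>\<alpha> \<circ> T = T \<circ> \<beta>\<close>.\<close>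

lemma linear_diff:
  "Vector_Spaces.linear s1 s2 f \<Longrightarrow> f (x - y) = f x - f y"
  by (rule module_hom.diff[OF linear.axioms(3)])

lemma bilinear_map_diff_left:
  "bilinear_map sA sB sC m \<Longrightarrow> m (x - x') y = m x y - m x' y"
  unfolding bilinear_map_def using linear_diff[of sA sC "\<lambda>x. m x y"] by blast

lemma bilinear_map_diff_right:
  "bilinear_map sA sB sC m \<Longrightarrow> m x (y - y') = m x y - m x y'"
  unfolding bilinear_map_def using linear_diff[of sB sC "m x"] by blast

lemma bilinear_map_diff:
  assumes "bilinear_map sA sB sC m" and "bilinear_map sA sB sC m'"
  shows "bilinear_map sA sB sC (\<lambda>x y. m x y - m' x y)"
proof -
  interpret C: vector_space sC
    using assms(1) unfolding bilinear_map_def linear_iff by blast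
  show ?thesis
    using assms unfolding bilinear_map_def linear_iff
    by (auto simp: algebra_simps C.scale_right_diff_distrib)
qed

lemma bilinear_map_compose_left:
  assumes "Vector_Spaces.linear sD sA f" and "bilinear_map sA sB sC m"
  shows "bilinear_map sD sB sC (\<lambda>x y. m (f x) y)"
  using assms Vector_Spaces.linear_compose[OF assms(1), of sC "\<lambda>x. m x _"]
  unfolding bilinear_map_def by (simp add: comp_def)

lemma hom_bimodule_commutator_action:
  assumes "hom_bimodule sA mult alpha sV l r beta"
  shows "(l (alpha x) (l y w - r y w) - r (alpha x) (l y w - r y w))
           - (l (alpha y) (l x w - r x w) - r (alpha y) (l x w - r x w))
         = l (mult x y - mult y x) (beta w) - r (mult x y - mult y x) (beta w)"
proof -
  have l: "bilinear_map sA sV sV l" and r: "bilinear_map sA sV sV r"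
    and left: "\<And>x y v. l (mult x y) (beta v) = l (alpha x) (l y v)"
    and middle: "\<And>x y v. r (alpha y) (l x v) = l (alpha x) (r y v)"
    and right: "\<And>x y v. r (alpha y) (r x v) = r (mult x y) (beta v)"
    using assms unfolding hom_bimodule_def by auto
  show ?thesis
    unfolding bilinear_map_diff_left[OF l] bilinear_map_diff_left[OF r]
      bilinear_map_diff_right[OF l] bilinear_map_diff_right[OF r] left right
    using middle[of x y w] middle[of y x w] by (simp add: algebra_simps)
qed

lemma O_operator_commutator:
  assumes "O_operator sA mult alpha sV l r beta T"
  shows "T (l (T u) v - r (T u) v) - T (l (T v) u - r (T v) u)
         = mult (T u) (T v) - mult (T v) (T u)"
proof -
  have lin: "Vector_Spaces.linear sV sA T"
    and O: "\<And>u v. mult (T u) (T v) = T (l (T u) v + r (T v) u)"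
    using assms unfolding O_operator_def by auto
  have "l (T u) v - r (T u) v - (l (T v) u - r (T v) u)
        = (l (T u) v + r (T v) u) - (l (T v) u + r (T u) v)"
    by (simp add: algebra_simps)
  then show ?thesis
    by (metis O linear_diff[OF lin])
qed

theorem mainTheorem16:
  fixes sA :: "'k::field \<Rightarrow> 'a::ab_group_add \<Rightarrow> 'a"
    and sV :: "'k \<Rightarrow> 'v::ab_group_add \<Rightarrow> 'v"
    and mult :: "'a \<Rightarrow> 'a \<Rightarrow> 'a" and alpha :: "'a \<Rightarrow> 'a"
    and l r :: "'a \<Rightarrow> 'v \<Rightarrow> 'v" and beta :: "'v \<Rightarrow> 'v" and T :: "'v \<Rightarrow> 'a"
  assumes "hom_assoc_algebra sA mult alpha"
    and "hom_bimodule sA mult alpha sV l r beta"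
    and "O_operator sA mult alpha sV l r beta T"
  shows "hom_prelie sV (\<lambda>u v. l (T u) v - r (T u) v) beta"
proof -
  define \<rho> where "\<rho> = (\<lambda>x v. l x v - r x v)"
  define pm where "pm = (\<lambda>u v. \<rho> (T u) v)"
  have vV: "vector_space sV" and beta: "Vector_Spaces.linear sV sV beta"
    and \<rho>: "bilinear_map sA sV sV \<rho>"
    using assms(2) bilinear_map_diff unfolding hom_bimodule_def \<rho>_def by auto
  have T: "Vector_Spaces.linear sV sA T" and alpha_T: "\<And>v. alpha (T v) = T (beta v)"
    using assms(3) unfolding O_operator_def by auto
  have "pm (pm u v) (beta w) - pm (pm v u) (beta w) = \<rho> (T (pm u v) - T (pm v u)) (beta w)"
    for u v w unfolding pm_def bilinear_map_diff_left[OF \<rho>] ..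
  also have "\<dots> u v w = \<rho> (mult (T u) (T v) - mult (T v) (T u)) (beta w)" for u v w
    using O_operator_commutator[OF assms(3)] unfolding pm_def \<rho>_def by simp
  also have "\<dots> u v w = pm (beta u) (pm v w) - pm (beta v) (pm u w)" for u v w
    using hom_bimodule_commutator_action[OF assms(2), of "T u" "T v" w]
    unfolding pm_def \<rho>_def alpha_T by simp
  finally have "pm (pm u v) (beta w) - pm (beta u) (pm v w)
                = pm (pm v u) (beta w) - pm (beta v) (pm u w)" for u v w
    by (simp add: algebra_simps)
  moreover have "bilinear_map sV sV sV pm"
    unfolding pm_def by (rule bilinear_map_compose_left[OF T \<rho>])
  ultimately show ?thesis
    using vV beta unfolding hom_prelie_def pm_def \<rho>_def by simp
qed

end
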